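(* Let $D$ be any distribution supported on $[0,1]$ with mean $\mu$ and variance $\sigma^2$, and let $\epsilon>0$. The two-phase mean estimator (described in the context) run on $D$ with parameter $\epsilon$ returns an unbiased estimate $\hat\mu$ of $\mu$ with $\sqrt{\mathbb{E}[(\hat\mu-\mu)^2]}\le \sqrt{6}\,\epsilon$, and its expected number of samples is $\frac{\sigma^2}{\epsilon^2}+\frac{2}{\epsilon}$.
   Context: The two-phase mean estimator with parameter $\epsilon$ works as follows (integer rounding of sample sizes is ignored). Set $T_1=1/\epsilon$ and draw i.i.d. samples $X_1,\dots,X_{T_1}$ from $D$. Compute $\tilde\mu=\frac{1}{T_1}\sum_{i=1}^{T_1}X_i$ and the sample variance $\tilde\sigma^2=\frac{1}{T_1-1}\sum_{i=1}^{T_1}(X_i-\tilde\mu)^2$. Set $T_2=\frac{1}{\epsilon}+\frac{\tilde\sigma^2}{\epsilon^2}$, draw $T_2$ fresh samples $X_{T_1+1},\dots,X_{T_1+T_2}$ from $D$, and return $\hat\mu=\frac{1}{T_2}\sum_{i=T_1+1}^{T_1+T_2}X_i$. *)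

theory Defs
  imports "HOL-Probability.Probability"
begin

text \<open>Model: an infinite i.i.d. sequence of samples from D, i.e. a point
  \<open>\<omega> :: nat \<Rightarrow> real\<close> of the product space \<open>PiM UNIV (\<lambda>_. D)\<close>.
  The first phase uses samples \<open>\<omega> 0, ..., \<omega> (T1-1)\<close>, the second phase uses
  the fresh samples \<open>\<omega> T1, ..., \<omega> (T1 + N2 - 1)\<close>.\<close>

text \<open>Phase-1 sample size: \<open>1/\<epsilon>\<close> rounded up (at least 2, so that the
  unbiased sample variance is defined).\<close>
definition tp_T1 :: "real \<Rightarrow> nat" where
  "tp_T1 \<epsilon> = max 2 (nat \<lceil>1 / \<epsilon>\<rceil>)"

definition tp_mu_tilde :: "real \<Rightarrow> (nat \<Rightarrow> real) \<Rightarrow> real" where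
  "tp_mu_tilde \<epsilon> \<omega> = (\<Sum>i<tp_T1 \<epsilon>. \<omega> i) / real (tp_T1 \<epsilon>)"

definition tp_sigma_tilde_sq :: "real \<Rightarrow> (nat \<Rightarrow> real) \<Rightarrow> real" where
  "tp_sigma_tilde_sq \<epsilon> \<omega> =
     (\<Sum>i<tp_T1 \<epsilon>. (\<omega> i - tp_mu_tilde \<epsilon> \<omega>)\<^sup>2) / (real (tp_T1 \<epsilon>) - 1)"

definition tp_T2 :: "real \<Rightarrow> (nat \<Rightarrow> real) \<Rightarrow> real" where
  "tp_T2 \<epsilon> \<omega> = 1 / \<epsilon> + tp_sigma_tilde_sq \<epsilon> \<omega> / \<epsilon>\<^sup>2"

definition tp_N2 :: "real \<Rightarrow> (nat \<Rightarrow> real) \<Rightarrow> nat" where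
  "tp_N2 \<epsilon> \<omega> = nat \<lceil>tp_T2 \<epsilon> \<omega>\<rceil>"

definition tp_mu_hat :: "real \<Rightarrow> (nat \<Rightarrow> real) \<Rightarrow> real" where
  "tp_mu_hat \<epsilon> \<omega> = (\<Sum>i<tp_N2 \<epsilon> \<omega>. \<omega> (tp_T1 \<epsilon> + i)) / real (tp_N2 \<epsilon> \<omega>)"

text \<open>Number of samples used, with rounding ignored: \<open>T1 + T2 = 1/\<epsilon> + T2\<close>.\<close>
definition tp_num_samples :: "real \<Rightarrow> (nat \<Rightarrow> real) \<Rightarrow> real" where
  "tp_num_samples \<epsilon> \<omega> = 1 / \<epsilon> + tp_T2 \<epsilon> \<omega>"

end

theory Submission
  imports Defs
begin

(* Conditionally on the first phase, mu_hat is the mean of N2 fresh samples, so it is unbiased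
   and E[(mu_hat - mu)^2] = E[sigma^2 / N2].  If sigma^2 <= 6 eps, the bound N2 >= 1/eps suffices.
   Otherwise T1 >= 3, and pointwise sigma^2 / N2 <= 2 eps^2 + 4 eps (s2 - sigma^2)^2 / sigma^2 with
   s2 the phase-1 sample variance; since |X - mu| <= 1 gives E[(X - mu)^4] <= sigma^2, the variance
   of s2 is at most sigma^2 / T1 <= sigma^2 eps, which yields 6 eps^2.  The moments of s2 come from
   the joint moments E[S1^a S2^b] of S1 = sum (X_i - mu) and S2 = sum (X_i - mu)^2, computed by
   induction on the number of samples because the next sample is independent of the earlier ones.
   The expected number of samples is linear in s2, which is unbiased. *)

definition sample_mean :: "nat \<Rightarrow> (nat \<Rightarrow> real) \<Rightarrow> real" where
  "sample_mean n \<omega> = (\<Sum>i<n. \<omega> i) / real n"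

definition sample_var :: "nat \<Rightarrow> (nat \<Rightarrow> real) \<Rightarrow> real" where
  "sample_var n \<omega> = (\<Sum>i<n. (\<omega> i - sample_mean n \<omega>)\<^sup>2) / (real n - 1)"

lemma sum_sq_dev_sample_mean:
  assumes "0 < n"
  shows "(\<Sum>i<n. (\<omega> i - sample_mean n \<omega>)\<^sup>2) = (\<Sum>i<n. (\<omega> i - c)\<^sup>2) - (\<Sum>i<n. \<omega> i - c)\<^sup>2 / real n"
proof -
  define t where "t = (\<Sum>i<n. \<omega> i - c) / real n"
  have mean: "sample_mean n \<omega> = c + t"
    using assms unfolding t_def sample_mean_def by (simp add: sum_subtractf field_simps)
  have "(\<Sum>i<n. (\<omega> i - sample_mean n \<omega>)\<^sup>2) = (\<Sum>i<n. (\<omega> i - c)\<^sup>2 - 2 * t * (\<omega> i - c) + t\<^sup>2)"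
    unfolding mean by (intro sum.cong) (auto simp: power2_eq_square algebra_simps)
  also have "\<dots> = (\<Sum>i<n. (\<omega> i - c)\<^sup>2) - 2 * t * (\<Sum>i<n. \<omega> i - c) + real n * t\<^sup>2"
    by (simp add: sum.distrib sum_subtractf flip: sum_distrib_left)
  also have "\<dots> = (\<Sum>i<n. (\<omega> i - c)\<^sup>2) - (\<Sum>i<n. \<omega> i - c)\<^sup>2 / real n"
    using assms unfolding t_def by (simp add: field_simps power2_eq_square)
  finally show ?thesis .
qed

lemma sample_var_nonneg: "0 \<le> sample_var n \<omega>"
  unfolding sample_var_def by (cases "n = 0") (auto intro!: divide_nonneg_nonneg sum_nonneg)

lemma sample_mean_in_unit_interval:
  assumes "\<forall>i. 0 \<le> \<omega> i \<and> \<omega> i \<le> 1"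
  shows "0 \<le> sample_mean n \<omega> \<and> sample_mean n \<omega> \<le> 1"
proof -
  have "(\<Sum>i<n. \<omega> i) \<le> real n" using assms sum_mono[of "{..<n}" \<omega> "\<lambda>_. 1"] by simp
  then show ?thesis
    using assms by (auto simp: sample_mean_def divide_le_eq intro!: divide_nonneg_nonneg sum_nonneg)
qed

lemma comb_seq_at: "comb_seq n \<omega> \<omega>' n = \<omega>' 0"
  using comb_seq_add[of n \<omega> \<omega>' 0] by simp

lemma sample_mean_comb_seq: "sample_mean n (comb_seq n \<omega> \<omega>') = sample_mean n \<omega>"
  unfolding sample_mean_def by (simp add: comb_seq_less)

lemma sample_var_comb_seq: "sample_var n (comb_seq n \<omega> \<omega>') = sample_var n \<omega>"
  unfolding sample_var_def sample_mean_comb_seq by (simp add: comb_seq_less)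

(* If t >= s/2, the term t / eps^2 of N already suffices; otherwise (t - s)^2 >= s^2/4 pays
   for using only 1 / eps <= N. *)
lemma variance_ratio_le:
  fixes \<epsilon> t s N :: real
  assumes \<epsilon>: "0 < \<epsilon>" and t: "0 \<le> t" and s: "0 < s" and N: "1 / \<epsilon> + t / \<epsilon>\<^sup>2 \<le> N"
  shows "s / N \<le> 2 * \<epsilon>\<^sup>2 + 4 * \<epsilon> * (t - s)\<^sup>2 / s"
proof -
  have "0 < 1 / \<epsilon>" "0 \<le> t / \<epsilon>\<^sup>2" using \<epsilon> t by auto
  with N have N_ge: "t / \<epsilon>\<^sup>2 \<le> N" "1 / \<epsilon> \<le> N" by linarith+
  show ?thesis
  proof (cases "s / 2 \<le> t")
    case True
    then have "0 < t" using s by linarith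
    have "s / N \<le> s / (t / \<epsilon>\<^sup>2)"
      using N_ge \<open>0 < t\<close> \<epsilon> s by (intro frac_le) auto
    also have "\<dots> \<le> 2 * \<epsilon>\<^sup>2"
      using True \<epsilon> s by (simp add: divide_le_eq)
    finally show ?thesis using \<epsilon> s by (intro add_increasing2) auto
  next
    case False
    have "s / N \<le> s / (1 / \<epsilon>)"
      using N_ge \<epsilon> s by (intro frac_le) auto
    also have "\<dots> \<le> 4 * \<epsilon> * (t - s)\<^sup>2 / s"
    proof -
      have "(s / 2)\<^sup>2 \<le> (t - s)\<^sup>2"
        using False s power_mono[of "s / 2" "s - t" 2] by (simp add: power2_commute)
      then have "\<epsilon> * s\<^sup>2 \<le> 4 * \<epsilon> * (t - s)\<^sup>2" using \<epsilon> by (simp add: power_divide)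
      then show ?thesis using s by (simp add: le_divide_eq power2_eq_square algebra_simps)
    qed
    finally show ?thesis by (simp add: add_increasing)
  qed
qed

lemma tp_T1_ge_2: "2 \<le> tp_T1 \<epsilon>"
  by (simp add: tp_T1_def)

lemma tp_T1_ge_inverse: "1 / \<epsilon> \<le> real (tp_T1 \<epsilon>)"
  unfolding tp_T1_def by linarith

lemma tp_sigma_tilde_sq_eq: "tp_sigma_tilde_sq \<epsilon> = sample_var (tp_T1 \<epsilon>)"
  by (simp add: fun_eq_iff tp_sigma_tilde_sq_def tp_mu_tilde_def sample_var_def sample_mean_def)

lemma tp_N2_ge: "1 / \<epsilon> + sample_var (tp_T1 \<epsilon>) \<omega> / \<epsilon>\<^sup>2 \<le> real (tp_N2 \<epsilon> \<omega>)"
  unfolding tp_N2_def tp_sigma_tilde_sq_eq[symmetric] tp_T2_def[symmetric] by linarith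

lemma tp_N2_ge_inverse: "1 / \<epsilon> \<le> real (tp_N2 \<epsilon> \<omega>)"
  using tp_N2_ge[of \<epsilon> \<omega>] divide_nonneg_nonneg[OF sample_var_nonneg zero_le_power2, of "tp_T1 \<epsilon>" \<omega> \<epsilon>]
  by linarith

lemma tp_N2_pos: "0 < \<epsilon> \<Longrightarrow> 0 < tp_N2 \<epsilon> \<omega>"
  using order_less_le_trans[OF _ tp_N2_ge_inverse, of 0 \<epsilon> \<omega>] by simp

lemma tp_N2_comb_seq: "tp_N2 \<epsilon> (comb_seq (tp_T1 \<epsilon>) \<omega> \<omega>') = tp_N2 \<epsilon> \<omega>"
  unfolding tp_N2_def tp_T2_def tp_sigma_tilde_sq_eq sample_var_comb_seq ..

lemma tp_mu_hat_eq: "tp_mu_hat \<epsilon> \<omega> = sample_mean (tp_N2 \<epsilon> \<omega>) (\<lambda>i. \<omega> (tp_T1 \<epsilon> + i))"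
  unfolding tp_mu_hat_def sample_mean_def ..

lemma tp_mu_hat_comb_seq: "tp_mu_hat \<epsilon> (comb_seq (tp_T1 \<epsilon>) \<omega> \<omega>') = sample_mean (tp_N2 \<epsilon> \<omega>) \<omega>'"
  using comb_seq_add[of "tp_T1 \<epsilon>" \<omega> \<omega>'] unfolding tp_mu_hat_eq tp_N2_comb_seq by (simp add: add.commute)

lemma tp_num_samples_eq: "tp_num_samples \<epsilon> = (\<lambda>\<omega>. 2 / \<epsilon> + sample_var (tp_T1 \<epsilon>) \<omega> / \<epsilon>\<^sup>2)"
  by (simp add: fun_eq_iff tp_num_samples_def tp_T2_def tp_sigma_tilde_sq_eq)

context sequence_space
begin

lemma AE_all_samples: "AE x in M. P x \<Longrightarrow> AE \<omega> in S. \<forall>i. P (\<omega> i)"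
  by (simp add: AE_all_countable AE_component)

lemma integral_component:
  fixes g :: "'a \<Rightarrow> real"
  assumes [measurable]: "g \<in> borel_measurable M"
  shows "(\<integral>\<omega>. g (\<omega> k) \<partial>S) = (\<integral>x. g x \<partial>M)"
proof -
  have "(\<integral>x. g x \<partial>M) = (\<integral>x. g x \<partial>distr S M (\<lambda>\<omega>. \<omega> k))"
    using PiM_component[of k] by simp
  also have "\<dots> = (\<integral>\<omega>. g (\<omega> k) \<partial>S)"
    by (subst integral_distr) auto
  finally show ?thesis by simp
qed

lemma integral_comb_seq:
  fixes H :: "(nat \<Rightarrow> 'a) \<Rightarrow> real"
  assumes H: "integrable S H"
  shows "(\<integral>\<omega>. H \<omega> \<partial>S) = (\<integral>\<omega>. (\<integral>\<omega>'. H (comb_seq n \<omega> \<omega>') \<partial>S) \<partial>S)"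
proof -
  interpret SS: pair_prob_space S S ..
  have [measurable]: "H \<in> borel_measurable S" using H by auto
  have "integrable (distr (S \<Otimes>\<^sub>M S) S (\<lambda>(\<omega>, \<omega>'). comb_seq n \<omega> \<omega>')) H"
    using PiM_comb_seq[of n] H by simp
  then have int: "integrable (S \<Otimes>\<^sub>M S) (\<lambda>(\<omega>, \<omega>'). H (comb_seq n \<omega> \<omega>'))"
    by (subst (asm) integrable_distr_eq) (auto simp: measurable_comb_seq case_prod_beta')
  have "(\<integral>\<omega>. H \<omega> \<partial>S) = (\<integral>\<omega>. H \<omega> \<partial>distr (S \<Otimes>\<^sub>M S) S (\<lambda>(\<omega>, \<omega>'). comb_seq n \<omega> \<omega>'))"
    using PiM_comb_seq[of n] by simp
  also have "\<dots> = (\<integral>(\<omega>, \<omega>'). H (comb_seq n \<omega> \<omega>') \<partial>(S \<Otimes>\<^sub>M S))"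
    by (subst integral_distr) (auto simp: measurable_comb_seq case_prod_beta')
  also have "\<dots> = (\<integral>\<omega>. (\<integral>\<omega>'. H (comb_seq n \<omega> \<omega>') \<partial>S) \<partial>S)"
    using SS.integral_fst[OF int] by simp
  finally show ?thesis .
qed

lemma integral_mult_fresh_sample:
  fixes f :: "(nat \<Rightarrow> 'a) \<Rightarrow> real"
  assumes "integrable S (\<lambda>\<omega>. f \<omega> * g (\<omega> n))" and "g \<in> borel_measurable M"
    and "\<And>\<omega> \<omega>'. f (comb_seq n \<omega> \<omega>') = f \<omega>"
  shows "(\<integral>\<omega>. f \<omega> * g (\<omega> n) \<partial>S) = (\<integral>\<omega>. f \<omega> \<partial>S) * (\<integral>x. g x \<partial>M)"
proof -
  have "(\<integral>\<omega>. f \<omega> * g (\<omega> n) \<partial>S) = (\<integral>\<omega>. (\<integral>\<omega>'. f \<omega> * g (\<omega>' 0) \<partial>S) \<partial>S)"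
    using integral_comb_seq[OF assms(1), of n] by (simp add: assms(3) comb_seq_at)
  also have "\<dots> = (\<integral>\<omega>. f \<omega> * (\<integral>x. g x \<partial>M) \<partial>S)"
    by (simp add: integral_component assms(2))
  finally show ?thesis by simp
qed

end

locale unit_interval_samples = sequence_space D for D :: "real measure" +
  assumes sets_D [measurable_cong]: "sets D = sets borel"
    and AE_unit_interval: "AE x in D. 0 \<le> x \<and> x \<le> 1"
begin

definition mean :: real where
  "mean = (\<integral>x. x \<partial>D)"

definition central_moment :: "nat \<Rightarrow> real" where
  "central_moment j = (\<integral>x. (x - mean) ^ j \<partial>D)"

abbreviation sigma2 :: real where
  "sigma2 \<equiv> central_moment 2"

lemma integrable_D_bounded:
  fixes B :: real
  assumes [measurable]: "g \<in> borel_measurable borel" and "\<And>x. 0 \<le> x \<Longrightarrow> x \<le> 1 \<Longrightarrow> \<bar>g x\<bar> \<le> B"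
  shows "integrable D g"
  using AE_unit_interval by (intro M.integrable_const_bound[where B=B]) (auto simp: assms(2) elim!: AE_mp)

lemma integrable_S_bounded:
  fixes f :: "(nat \<Rightarrow> real) \<Rightarrow> real" and B :: real
  assumes "f \<in> borel_measurable S" and "\<And>\<omega>. \<forall>i. 0 \<le> \<omega> i \<and> \<omega> i \<le> 1 \<Longrightarrow> \<bar>f \<omega>\<bar> \<le> B"
  shows "integrable S f"
  using AE_all_samples[OF AE_unit_interval] assms
  by (intro P.integrable_const_bound[where B=B]) (auto elim!: AE_mp)

lemma integrable_D_id: "integrable D (\<lambda>x. x)"
  by (rule integrable_D_bounded[where B=1]) auto

lemma mean_bounds: "0 \<le> mean" "mean \<le> 1"
proof -
  show "0 \<le> mean"
    unfolding mean_def using AE_unit_interval by (intro integral_nonneg_AE) auto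
  have "mean \<le> (\<integral>x. 1 \<partial>D)"
    unfolding mean_def using AE_unit_interval
    by (intro integral_mono_AE[OF integrable_D_id]) auto
  then show "mean \<le> 1" by (simp add: M.prob_space)
qed

lemma abs_power_dev_le_1: "0 \<le> x \<Longrightarrow> x \<le> 1 \<Longrightarrow> \<bar>(x - mean) ^ j\<bar> \<le> 1"
  using mean_bounds by (auto simp: power_abs intro: power_le_one)

lemma integrable_power_dev: "integrable D (\<lambda>x. (x - mean) ^ j)"
  by (rule integrable_D_bounded[where B=1]) (auto simp: abs_power_dev_le_1)

lemma central_moment_0 [simp]: "central_moment 0 = 1"
  by (simp add: central_moment_def M.prob_space)

lemma central_moment_1 [simp]: "central_moment (Suc 0) = 0"
  using integrable_D_id by (simp add: central_moment_def mean_def M.prob_space)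

lemma central_moment_even_nonneg: "even j \<Longrightarrow> 0 \<le> central_moment j"
  unfolding central_moment_def by (intro integral_nonneg_AE) (auto simp: zero_le_even_power)

lemma central_moment_4_le: "central_moment 4 \<le> sigma2"
  unfolding central_moment_def
proof (rule integral_mono_AE[OF integrable_power_dev integrable_power_dev])
  show "AE x in D. (x - mean) ^ 4 \<le> (x - mean) ^ 2"
    using AE_unit_interval
  proof (rule AE_mp, intro AE_I2 impI)
    fix x :: real assume "0 \<le> x \<and> x \<le> 1"
    then have "(x - mean)\<^sup>2 * (x - mean)\<^sup>2 \<le> 1 * (x - mean)\<^sup>2"
      using abs_power_dev_le_1[of x 2] by (intro mult_right_mono) auto
    then show "(x - mean) ^ 4 \<le> (x - mean) ^ 2" by (simp flip: power_add)
  qed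
qed

lemma sigma2_le_1: "sigma2 \<le> 1"
proof -
  have "sigma2 \<le> (\<integral>x. 1 \<partial>D)"
    unfolding central_moment_def
    using AE_unit_interval abs_power_dev_le_1[of _ 2]
    by (intro integral_mono_AE[OF integrable_power_dev]) (auto elim!: AE_mp)
  then show ?thesis by (simp add: M.prob_space)
qed

definition dev_sum :: "nat \<Rightarrow> (nat \<Rightarrow> real) \<Rightarrow> real" where
  "dev_sum n \<omega> = (\<Sum>i<n. \<omega> i - mean)"

definition sq_dev_sum :: "nat \<Rightarrow> (nat \<Rightarrow> real) \<Rightarrow> real" where
  "sq_dev_sum n \<omega> = (\<Sum>i<n. (\<omega> i - mean)\<^sup>2)"

definition dev_monomial :: "nat \<Rightarrow> nat \<Rightarrow> nat \<Rightarrow> nat \<Rightarrow> (nat \<Rightarrow> real) \<Rightarrow> real" where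
  "dev_monomial a b j n \<omega> = dev_sum n \<omega> ^ a * sq_dev_sum n \<omega> ^ b * (\<omega> n - mean) ^ j"

definition joint_moment :: "nat \<Rightarrow> nat \<Rightarrow> nat \<Rightarrow> real" where
  "joint_moment a b n = (\<integral>\<omega>. dev_sum n \<omega> ^ a * sq_dev_sum n \<omega> ^ b \<partial>S)"

lemma dev_sum_Suc: "dev_sum (Suc n) \<omega> = dev_sum n \<omega> + (\<omega> n - mean)"
  by (simp add: dev_sum_def)

lemma sq_dev_sum_Suc: "sq_dev_sum (Suc n) \<omega> = sq_dev_sum n \<omega> + (\<omega> n - mean)\<^sup>2"
  by (simp add: sq_dev_sum_def)

lemma measurable_dev_monomial [measurable]: "dev_monomial a b j n \<in> borel_measurable S"
  unfolding dev_monomial_def dev_sum_def sq_dev_sum_def by measurable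

lemma abs_dev_monomial_le:
  assumes "\<forall>i. 0 \<le> \<omega> i \<and> \<omega> i \<le> 1"
  shows "\<bar>dev_monomial a b j n \<omega>\<bar> \<le> real n ^ a * real n ^ b"
proof -
  have dev: "\<bar>\<omega> i - mean\<bar> \<le> 1" "(\<omega> i - mean)\<^sup>2 \<le> 1" for i
    using assms abs_power_dev_le_1[of "\<omega> i" 1] abs_power_dev_le_1[of "\<omega> i" 2] by auto
  have "\<bar>dev_sum n \<omega>\<bar> \<le> (\<Sum>i<n. \<bar>\<omega> i - mean\<bar>)"
    unfolding dev_sum_def by (rule sum_abs)
  also have "\<dots> \<le> real n"
    using dev(1) sum_mono[of "{..<n}" "\<lambda>i. \<bar>\<omega> i - mean\<bar>" "\<lambda>_. 1"] by simp
  finally have "\<bar>dev_sum n \<omega>\<bar> \<le> real n" .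
  moreover have "\<bar>sq_dev_sum n \<omega>\<bar> \<le> real n"
    unfolding sq_dev_sum_def using dev(2) sum_mono[of "{..<n}" "\<lambda>i. (\<omega> i - mean)\<^sup>2" "\<lambda>_. 1"]
    by (simp add: sum_nonneg)
  moreover have "\<bar>(\<omega> n - mean) ^ j\<bar> \<le> 1"
    using assms abs_power_dev_le_1 by simp
  ultimately show ?thesis
    unfolding dev_monomial_def abs_mult power_abs
    by (intro order_trans[OF mult_right_le_one_le] mult_mono power_mono) auto
qed

lemma integrable_dev_monomial [simp]: "integrable S (dev_monomial a b j n)"
  using abs_dev_monomial_le by (intro integrable_S_bounded) auto

lemma integral_dev_monomial [simp]:
  "(\<integral>\<omega>. dev_monomial a b j n \<omega> \<partial>S) = joint_moment a b n * central_moment j"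
proof -
  have "dev_sum n (comb_seq n \<omega> \<omega>') = dev_sum n \<omega>" "sq_dev_sum n (comb_seq n \<omega> \<omega>') = sq_dev_sum n \<omega>"
    for \<omega> \<omega>' by (simp_all add: dev_sum_def sq_dev_sum_def comb_seq_less)
  then show ?thesis
    using integrable_dev_monomial[of a b j n]
    unfolding dev_monomial_def joint_moment_def central_moment_def
    by (intro integral_mult_fresh_sample) auto
qed

lemma joint_moment_0_0 [simp]: "joint_moment 0 0 n = 1"
  by (simp add: joint_moment_def P.prob_space)

lemma joint_moment_at_0: "joint_moment a b 0 = (if a = 0 \<and> b = 0 then 1 else 0)"
  by (auto simp: joint_moment_def dev_sum_def sq_dev_sum_def P.prob_space)

(* Stated with Suc 0, the simp normal form of 1 :: nat, so that they work as rewrite rules. *)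
lemma joint_moment_1_0: "joint_moment (Suc 0) 0 n = 0"
proof (induction n)
  case (Suc n)
  have "joint_moment (Suc 0) 0 (Suc n) = (\<integral>\<omega>. dev_monomial 1 0 0 n \<omega> + dev_monomial 0 0 1 n \<omega> \<partial>S)"
    unfolding joint_moment_def dev_monomial_def dev_sum_Suc sq_dev_sum_Suc power_Suc0_right
    by (intro Bochner_Integration.integral_cong refl) algebra
  then show ?case using Suc.IH by simp
qed (simp add: joint_moment_at_0)

lemma joint_moment_2_0: "joint_moment 2 0 n = real n * sigma2"
proof (induction n)
  case (Suc n)
  have "joint_moment 2 0 (Suc n) = (\<integral>\<omega>. dev_monomial 2 0 0 n \<omega> + 2 * dev_monomial 1 0 1 n \<omega>
      + dev_monomial 0 0 2 n \<omega> \<partial>S)"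
    unfolding joint_moment_def dev_monomial_def dev_sum_Suc sq_dev_sum_Suc power_Suc0_right
    by (intro Bochner_Integration.integral_cong refl) algebra
  then show ?case using Suc.IH by (simp add: joint_moment_1_0 algebra_simps)
qed (simp add: joint_moment_at_0)

lemma joint_moment_0_1: "joint_moment 0 (Suc 0) n = real n * sigma2"
proof (induction n)
  case (Suc n)
  have "joint_moment 0 (Suc 0) (Suc n) = (\<integral>\<omega>. dev_monomial 0 1 0 n \<omega> + dev_monomial 0 0 2 n \<omega> \<partial>S)"
    unfolding joint_moment_def dev_monomial_def dev_sum_Suc sq_dev_sum_Suc power_Suc0_right
    by (intro Bochner_Integration.integral_cong refl) algebra
  then show ?case using Suc.IH by (simp add: algebra_simps)
qed (simp add: joint_moment_at_0)

lemma joint_moment_4_0: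
  "joint_moment 4 0 n = real n * central_moment 4 + 3 * real n * (real n - 1) * sigma2\<^sup>2"
proof (induction n)
  case (Suc n)
  have "joint_moment 4 0 (Suc n) = (\<integral>\<omega>. dev_monomial 4 0 0 n \<omega> + 4 * dev_monomial 3 0 1 n \<omega>
      + 6 * dev_monomial 2 0 2 n \<omega> + 4 * dev_monomial 1 0 3 n \<omega> + dev_monomial 0 0 4 n \<omega> \<partial>S)"
    unfolding joint_moment_def dev_monomial_def dev_sum_Suc sq_dev_sum_Suc power_Suc0_right
    by (intro Bochner_Integration.integral_cong refl) algebra
  then show ?case
    using Suc.IH by (simp add: joint_moment_1_0 joint_moment_2_0 algebra_simps power2_eq_square)
qed (simp add: joint_moment_at_0)

lemma joint_moment_2_1:
  "joint_moment 2 (Suc 0) n = real n * central_moment 4 + real n * (real n - 1) * sigma2\<^sup>2"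
proof (induction n)
  case (Suc n)
  have "joint_moment 2 (Suc 0) (Suc n) = (\<integral>\<omega>. dev_monomial 2 1 0 n \<omega> + dev_monomial 2 0 2 n \<omega>
      + 2 * dev_monomial 1 1 1 n \<omega> + 2 * dev_monomial 1 0 3 n \<omega> + dev_monomial 0 1 2 n \<omega>
      + dev_monomial 0 0 4 n \<omega> \<partial>S)"
    unfolding joint_moment_def dev_monomial_def dev_sum_Suc sq_dev_sum_Suc power_Suc0_right
    by (intro Bochner_Integration.integral_cong refl) algebra
  then show ?case
    using Suc.IH
    by (simp add: joint_moment_1_0 joint_moment_2_0 joint_moment_0_1 algebra_simps power2_eq_square)
qed (simp add: joint_moment_at_0)

lemma joint_moment_0_2:
  "joint_moment 0 2 n = real n * central_moment 4 + real n * (real n - 1) * sigma2\<^sup>2"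
proof (induction n)
  case (Suc n)
  have "joint_moment 0 2 (Suc n) = (\<integral>\<omega>. dev_monomial 0 2 0 n \<omega> + 2 * dev_monomial 0 1 2 n \<omega>
      + dev_monomial 0 0 4 n \<omega> \<partial>S)"
    unfolding joint_moment_def dev_monomial_def dev_sum_Suc sq_dev_sum_Suc power_Suc0_right
    by (intro Bochner_Integration.integral_cong refl) algebra
  then show ?case using Suc.IH by (simp add: joint_moment_0_1 algebra_simps power2_eq_square)
qed (simp add: joint_moment_at_0)

lemma sample_mean_eq_dev_sum: "0 < n \<Longrightarrow> sample_mean n \<omega> = mean + dev_monomial 1 0 0 n \<omega> / real n"
  by (simp add: sample_mean_def dev_monomial_def dev_sum_def sum_subtractf field_simps)

lemma integral_sample_mean: "0 < n \<Longrightarrow> (\<integral>\<omega>. sample_mean n \<omega> \<partial>S) = mean"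
  by (simp add: sample_mean_eq_dev_sum joint_moment_1_0 P.prob_space)

lemma integral_sample_mean_sq_dev:
  assumes "0 < n"
  shows "(\<integral>\<omega>. (sample_mean n \<omega> - mean)\<^sup>2 \<partial>S) = sigma2 / real n"
proof -
  have "(sample_mean n \<omega> - mean)\<^sup>2 = dev_monomial 2 0 0 n \<omega> / (real n)\<^sup>2" for \<omega>
    using assms by (simp add: sample_mean_eq_dev_sum dev_monomial_def power_divide)
  then show ?thesis
    using assms by (simp add: joint_moment_2_0 power2_eq_square)
qed

lemma sample_var_eq_dev_monomials:
  "0 < n \<Longrightarrow>
    sample_var n \<omega> = (dev_monomial 0 1 0 n \<omega> - dev_monomial 2 0 0 n \<omega> / real n) / (real n - 1)"
  by (simp add: sample_var_def sum_sq_dev_sample_mean[where c=mean] dev_monomial_def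
      dev_sum_def sq_dev_sum_def)

lemma sample_var_sq_eq_dev_monomials:
  assumes "2 \<le> n"
  shows "(sample_var n \<omega>)\<^sup>2 =
    (dev_monomial 0 2 0 n \<omega> - 2 * dev_monomial 2 1 0 n \<omega> / real n
      + dev_monomial 4 0 0 n \<omega> / (real n)\<^sup>2) / (real n - 1)\<^sup>2"
proof -
  have "0 < n" "real n - 1 \<noteq> 0" using assms by auto
  then show ?thesis
    unfolding sample_var_eq_dev_monomials[OF \<open>0 < n\<close>]
    by (simp add: dev_monomial_def power_divide power2_diff field_simps eval_nat_numeral)
qed

lemma integrable_sample_var: "0 < n \<Longrightarrow> integrable S (sample_var n)"
  by (subst Bochner_Integration.integrable_cong[OF refl sample_var_eq_dev_monomials]) auto

lemma integrable_sample_var_sq: "2 \<le> n \<Longrightarrow> integrable S (\<lambda>\<omega>. (sample_var n \<omega>)\<^sup>2)"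
  by (simp add: sample_var_sq_eq_dev_monomials)

lemma integrable_sample_var_sq_dev: "2 \<le> n \<Longrightarrow> integrable S (\<lambda>\<omega>. (sample_var n \<omega> - sigma2)\<^sup>2)"
  using integrable_sample_var[of n] integrable_sample_var_sq[of n] by (simp add: power2_diff)

lemma integral_sample_var:
  assumes "2 \<le> n"
  shows "(\<integral>\<omega>. sample_var n \<omega> \<partial>S) = sigma2"
  using assms by (simp add: sample_var_eq_dev_monomials joint_moment_0_1 joint_moment_2_0 field_simps)

lemma integral_sample_var_sq_dev:
  assumes "2 \<le> n"
  shows "(\<integral>\<omega>. (sample_var n \<omega> - sigma2)\<^sup>2 \<partial>S) =
    central_moment 4 / real n - sigma2\<^sup>2 * (real n - 3) / (real n * (real n - 1))"
proof -
  have "(\<integral>\<omega>. (sample_var n \<omega> - sigma2)\<^sup>2 \<partial>S) =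
      (\<integral>\<omega>. (sample_var n \<omega>)\<^sup>2 \<partial>S) - 2 * sigma2 * (\<integral>\<omega>. sample_var n \<omega> \<partial>S) + sigma2\<^sup>2"
    using assms integrable_sample_var[of n] integrable_sample_var_sq[of n]
    by (simp add: power2_diff P.prob_space)
  also have "\<dots> = central_moment 4 / real n - sigma2\<^sup>2 * (real n - 3) / (real n * (real n - 1))"
    using assms
    by (simp add: integral_sample_var sample_var_sq_eq_dev_monomials joint_moment_0_2
        joint_moment_2_1 joint_moment_4_0)
      (simp add: divide_simps, algebra)
  finally show ?thesis .
qed

lemma integral_sample_var_sq_dev_le:
  assumes "3 \<le> n"
  shows "(\<integral>\<omega>. (sample_var n \<omega> - sigma2)\<^sup>2 \<partial>S) \<le> sigma2 / real n"
proof -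
  have "0 \<le> sigma2\<^sup>2 * (real n - 3) / (real n * (real n - 1))"
    using assms by (intro divide_nonneg_nonneg mult_nonneg_nonneg) auto
  then have "(\<integral>\<omega>. (sample_var n \<omega> - sigma2)\<^sup>2 \<partial>S) \<le> central_moment 4 / real n"
    using assms by (simp add: integral_sample_var_sq_dev)
  also have "\<dots> \<le> sigma2 / real n"
    using central_moment_4_le by (simp add: divide_right_mono)
  finally show ?thesis .
qed

lemma measurable_sample_var [measurable]: "sample_var n \<in> borel_measurable S"
  unfolding sample_var_def[abs_def] sample_mean_def by measurable

lemma measurable_tp_N2 [measurable]: "tp_N2 \<epsilon> \<in> measurable S (count_space UNIV)"
  unfolding tp_N2_def[abs_def] tp_T2_def tp_sigma_tilde_sq_eq by measurable

lemma measurable_tp_mu_hat [measurable]: "tp_mu_hat \<epsilon> \<in> borel_measurable S"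
proof -
  let ?f = "\<lambda>m \<omega>. sample_mean m (\<lambda>i. \<omega> (tp_T1 \<epsilon> + i))"
  have "?f m \<in> borel_measurable S" for m
    unfolding sample_mean_def by measurable
  then have "(\<lambda>\<omega>. ?f (tp_N2 \<epsilon> \<omega>) \<omega>) \<in> borel_measurable S"
    by (rule measurable_compose_countable'[OF _ measurable_tp_N2]) auto
  then show ?thesis unfolding tp_mu_hat_eq[abs_def] .
qed

lemma tp_mu_hat_in_unit_interval:
  "\<forall>i. 0 \<le> \<omega> i \<and> \<omega> i \<le> 1 \<Longrightarrow> 0 \<le> tp_mu_hat \<epsilon> \<omega> \<and> tp_mu_hat \<epsilon> \<omega> \<le> 1"
  unfolding tp_mu_hat_eq by (rule sample_mean_in_unit_interval) simp

lemma integrable_tp_mu_hat: "integrable S (tp_mu_hat \<epsilon>)"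
  using tp_mu_hat_in_unit_interval by (intro integrable_S_bounded[where B=1]) auto

lemma integral_tp_mu_hat:
  assumes "0 < \<epsilon>"
  shows "(\<integral>\<omega>. tp_mu_hat \<epsilon> \<omega> \<partial>S) = mean"
  using assms
  by (simp add: integral_comb_seq[OF integrable_tp_mu_hat, of _ "tp_T1 \<epsilon>"] tp_mu_hat_comb_seq
      integral_sample_mean tp_N2_pos P.prob_space)

lemma integral_tp_mu_hat_sq_dev:
  assumes "0 < \<epsilon>"
  shows "(\<integral>\<omega>. (tp_mu_hat \<epsilon> \<omega> - mean)\<^sup>2 \<partial>S) = (\<integral>\<omega>. sigma2 / real (tp_N2 \<epsilon> \<omega>) \<partial>S)"
proof -
  have "integrable S (\<lambda>\<omega>. (tp_mu_hat \<epsilon> \<omega> - mean)\<^sup>2)"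
    using mean_bounds
    by (intro integrable_S_bounded[where B=1])
      (auto simp: abs_square_le_1 abs_le_iff dest!: tp_mu_hat_in_unit_interval[where \<epsilon>=\<epsilon>])
  then show ?thesis
    using assms
    by (simp add: integral_comb_seq[of _ "tp_T1 \<epsilon>"] tp_mu_hat_comb_seq
        integral_sample_mean_sq_dev tp_N2_pos)
qed

lemma integrable_sigma2_div_tp_N2:
  assumes "0 < \<epsilon>"
  shows "integrable S (\<lambda>\<omega>. sigma2 / real (tp_N2 \<epsilon> \<omega>))"
  using tp_N2_pos[OF assms] central_moment_even_nonneg[of 2]
  by (intro integrable_S_bounded[where B=sigma2]) (auto simp: divide_le_eq mult_le_cancel_left1 Suc_le_eq)

lemma integral_sigma2_div_tp_N2_le:
  assumes \<epsilon>: "0 < \<epsilon>"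
  shows "(\<integral>\<omega>. sigma2 / real (tp_N2 \<epsilon> \<omega>) \<partial>S) \<le> 6 * \<epsilon>\<^sup>2"
proof -
  note int = integrable_sigma2_div_tp_N2[OF \<epsilon>]
  show ?thesis
  proof (cases "sigma2 \<le> 6 * \<epsilon>")
    case True
    have "(\<integral>\<omega>. sigma2 / real (tp_N2 \<epsilon> \<omega>) \<partial>S) \<le> (\<integral>\<omega>. sigma2 / (1 / \<epsilon>) \<partial>S)"
      using tp_N2_ge_inverse central_moment_even_nonneg[of 2] \<epsilon> by (intro integral_mono[OF int] frac_le) auto
    also have "\<dots> = sigma2 * \<epsilon>" by (simp add: P.prob_space)
    also have "\<dots> \<le> 6 * \<epsilon>\<^sup>2" using True \<epsilon> by (simp add: power2_eq_square)
    finally show ?thesis .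
  next
    case False
    then have sigma2_pos: "0 < sigma2" using \<epsilon> by linarith
    have "6 < 1 / \<epsilon>" using False sigma2_le_1 \<epsilon> by (simp add: field_simps)
    then have T1_ge_3: "3 \<le> tp_T1 \<epsilon>" using tp_T1_ge_inverse[of \<epsilon>] by linarith
    have "(\<integral>\<omega>. sigma2 / real (tp_N2 \<epsilon> \<omega>) \<partial>S)
        \<le> (\<integral>\<omega>. 2 * \<epsilon>\<^sup>2 + 4 * \<epsilon> * (sample_var (tp_T1 \<epsilon>) \<omega> - sigma2)\<^sup>2 / sigma2 \<partial>S)"
      using integrable_sample_var_sq_dev[OF tp_T1_ge_2] sample_var_nonneg tp_N2_ge \<epsilon> sigma2_pos
      by (intro integral_mono[OF int] variance_ratio_le) auto
    also have "\<dots> = 2 * \<epsilon>\<^sup>2 + 4 * \<epsilon> / sigma2 * (\<integral>\<omega>. (sample_var (tp_T1 \<epsilon>) \<omega> - sigma2)\<^sup>2 \<partial>S)"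
      using integrable_sample_var_sq_dev[OF tp_T1_ge_2] by (simp add: P.prob_space)
    also have "\<dots> \<le> 2 * \<epsilon>\<^sup>2 + 4 * \<epsilon> / sigma2 * (sigma2 / real (tp_T1 \<epsilon>))"
      using integral_sample_var_sq_dev_le[OF T1_ge_3] \<epsilon> sigma2_pos by (intro add_left_mono mult_left_mono) auto
    also have "\<dots> = 2 * \<epsilon>\<^sup>2 + 4 * \<epsilon> * (1 / real (tp_T1 \<epsilon>))"
      using sigma2_pos by simp
    also have "\<dots> \<le> 2 * \<epsilon>\<^sup>2 + 4 * \<epsilon> * \<epsilon>"
    proof -
      have "1 / real (tp_T1 \<epsilon>) \<le> \<epsilon>"
        using tp_T1_ge_inverse[of \<epsilon>] T1_ge_3 \<epsilon> by (simp add: field_simps)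
      then show ?thesis using \<epsilon> by (intro add_left_mono mult_left_mono) auto
    qed
    finally show ?thesis by (simp add: power2_eq_square)
  qed
qed

lemma integrable_tp_num_samples: "integrable S (tp_num_samples \<epsilon>)"
  using integrable_sample_var[of "tp_T1 \<epsilon>"] tp_T1_ge_2[of \<epsilon>] by (simp add: tp_num_samples_eq)

lemma integral_tp_num_samples: "(\<integral>\<omega>. tp_num_samples \<epsilon> \<omega> \<partial>S) = sigma2 / \<epsilon>\<^sup>2 + 2 / \<epsilon>"
  using integrable_sample_var[of "tp_T1 \<epsilon>"] integral_sample_var tp_T1_ge_2[of \<epsilon>]
  by (simp add: tp_num_samples_eq P.prob_space)

end

theorem theorem3p1:
  fixes D :: "real measure" and \<epsilon> :: real
  assumes D_prob: "prob_space D"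
    and D_borel: "sets D = sets borel"
    and D_supp: "AE x in D. 0 \<le> x \<and> x \<le> 1"
    and eps_pos: "0 < \<epsilon>"
  defines "\<mu> \<equiv> prob_space.expectation D (\<lambda>x. x)"
    and "\<sigma>2 \<equiv> prob_space.variance D (\<lambda>x. x)"
    and "\<Omega> \<equiv> PiM (UNIV :: nat set) (\<lambda>_. D)"
  shows "(integrable \<Omega> (tp_mu_hat \<epsilon>) \<and> (\<integral>\<omega>. tp_mu_hat \<epsilon> \<omega> \<partial>\<Omega>) = \<mu>) \<and>
         sqrt (\<integral>\<omega>. (tp_mu_hat \<epsilon> \<omega> - \<mu>)\<^sup>2 \<partial>\<Omega>) \<le> sqrt 6 * \<epsilon> \<and>
         (integrable \<Omega> (tp_num_samples \<epsilon>) \<and>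
         (\<integral>\<omega>. tp_num_samples \<epsilon> \<omega> \<partial>\<Omega>) = \<sigma>2 / \<epsilon>\<^sup>2 + 2 / \<epsilon>)"
proof -
  interpret unit_interval_samples D
    unfolding unit_interval_samples_def unit_interval_samples_axioms_def sequence_space_def
      product_prob_space_def product_prob_space_axioms_def product_sigma_finite_def
    using D_prob D_borel D_supp by (auto simp: prob_space_imp_sigma_finite)
  have [simp]: "\<Omega> = S" "\<mu> = mean" "\<sigma>2 = sigma2"
    by (simp_all add: \<Omega>_def \<mu>_def \<sigma>2_def mean_def central_moment_def)
  have "(\<integral>\<omega>. (tp_mu_hat \<epsilon> \<omega> - \<mu>)\<^sup>2 \<partial>\<Omega>) \<le> 6 * \<epsilon>\<^sup>2"
    using integral_tp_mu_hat_sq_dev[OF eps_pos] integral_sigma2_div_tp_N2_le[OF eps_pos] by simp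
  then have "sqrt (\<integral>\<omega>. (tp_mu_hat \<epsilon> \<omega> - \<mu>)\<^sup>2 \<partial>\<Omega>) \<le> sqrt (6 * \<epsilon>\<^sup>2)"
    by (rule real_sqrt_le_mono)
  also have "\<dots> = sqrt 6 * \<epsilon>"
    using eps_pos by (simp add: real_sqrt_mult)
  finally show ?thesis
    using integrable_tp_mu_hat integral_tp_mu_hat[OF eps_pos]
      integrable_tp_num_samples integral_tp_num_samples by simp
qed

end
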